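(* Let $X$ be a Hausdorff zero-dimensional topological space. Then $\mathrm{Homeo}(X)$ is fully transitive.
   Context: A space is zero-dimensional if its topology has a basis of clopen sets. Two points $x,y\in X$ are similar if there are neighbourhoods $U_x\ni x$, $U_y\ni y$ and a homeomorphism $h\colon U_x\to U_y$ with $h(x)=y$. A group $G$ of homeomorphisms of $X$ is fully transitive if for every natural number $k$ and all $k$-tuples of pairwise distinct points $(x_1,\dots,x_k)$, $(y_1,\dots,y_k)$ with $x_i$ similar to $y_i$ for each $i$, there is $g\in G$ with $g(x_i)=y_i$ for all $i$. *)

theory Defs
  imports "HOL-Analysis.Analysis"
begin

definition zero_dimensional :: "'a topology \<Rightarrow> bool" where
  "zero_dimensional X \<longleftrightarrow>
     (\<exists>\<B>. (\<forall>B\<in>\<B>. (openin X B \<and> closedin X B)) \<and> openin X = arbitrary union_of (\<lambda>U. U \<in> \<B>))"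

definition similar_points :: "'a topology \<Rightarrow> 'a \<Rightarrow> 'a \<Rightarrow> bool" where
  "similar_points X x y \<longleftrightarrow>
     (\<exists>U V h. openin X U \<and> x \<in> U \<and> openin X V \<and> y \<in> V \<and>
              homeomorphic_map (subtopology X U) (subtopology X V) h \<and> h x = y)"

definition Homeo :: "'a topology \<Rightarrow> ('a \<Rightarrow> 'a) set" where
  "Homeo X = {g. homeomorphic_map X X g}"

definition fully_transitive :: "'a topology \<Rightarrow> ('a \<Rightarrow> 'a) set \<Rightarrow> bool" where
  "fully_transitive X G \<longleftrightarrow>
     (\<forall>(k::nat) (x::nat \<Rightarrow> 'a) y.
        (\<forall>i<k. x i \<in> topspace X \<and> y i \<in> topspace X) \<and>
        inj_on x {..<k} \<and> inj_on y {..<k} \<and>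
        (\<forall>i<k. similar_points X (x i) (y i))
        \<longrightarrow> (\<exists>g\<in>G. \<forall>i<k. g (x i) = y i))"

end

theory Submission
  imports Defs
begin

text \<open>A single point is moved by a swap: if \<open>a \<noteq> b\<close> are similar, Hausdorffness and
  zero-dimensionality give disjoint clopen sets \<open>C \<ni> a\<close> and \<open>D = h C \<ni> b\<close>, avoiding any
  given finite set, on which the local homeomorphism \<open>h\<close> restricts to a homeomorphism.
  The map that is \<open>h\<close> on \<open>C\<close>, \<open>h\<^sup>-\<^sup>1\<close> on \<open>D\<close> and the identity elsewhere is then a
  homeomorphism of \<open>X\<close>, since \<open>C\<close>, \<open>D\<close> and their complement form an open partition. Tuples
  are handled one point at a time: after the first points are placed, the image of the next
  one is still similar to its target, and the swap can avoid the targets already reached.\<close>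

lemma similar_points_in_topspace:
  assumes "similar_points X a b"
  shows "a \<in> topspace X" "b \<in> topspace X"
  using assms openin_subset unfolding similar_points_def by blast+

lemma similar_points_homeomorphic_image:
  assumes "similar_points X a b" and g: "homeomorphic_map X X g"
  shows "similar_points X (g a) b"
proof -
  obtain U V h where UV: "openin X U" "a \<in> U" "openin X V" "b \<in> V"
    and h: "homeomorphic_map (subtopology X U) (subtopology X V) h" "h a = b"
    using assms(1) unfolding similar_points_def by blast
  obtain g' where gg': "homeomorphic_maps X X g g'"
    using g homeomorphic_map_maps by blast
  have "g ` (topspace X \<inter> U) = topspace X \<inter> g ` U"
    using gg' openin_subset[OF UV(1)] unfolding homeomorphic_maps_def continuous_map_def by auto
  then have "homeomorphic_maps (subtopology X U) (subtopology X (g ` U)) g g'"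
    by (rule homeomorphic_maps_subtopologies[OF gg'])
  then have "homeomorphic_map (subtopology X (g ` U)) (subtopology X U) g'"
    by (meson homeomorphic_maps_imp_map homeomorphic_maps_sym)
  then have "homeomorphic_map (subtopology X (g ` U)) (subtopology X V) (h \<circ> g')"
    using h(1) homeomorphic_map_compose by blast
  moreover have "openin X (g ` U)"
    using homeomorphic_imp_open_map[OF g] UV(1) unfolding open_map_def by blast
  moreover have "g' (g a) = a"
    using gg' UV(1,2) openin_subset unfolding homeomorphic_maps_def by blast
  ultimately show ?thesis
    unfolding similar_points_def using UV h(2)
    by (intro exI[of _ "g ` U"] exI[of _ V] exI[of _ "h \<circ> g'"]) auto
qed

lemma zero_dimensional_clopen_subset:
  assumes "zero_dimensional X" "openin X S" "p \<in> S"
  obtains C where "openin X C" "closedin X C" "p \<in> C" "C \<subseteq> S"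
proof -
  obtain \<B> where \<B>: "\<forall>B\<in>\<B>. openin X B \<and> closedin X B"
    and basis: "openin X = arbitrary union_of (\<lambda>U. U \<in> \<B>)"
    using assms(1) unfolding zero_dimensional_def by blast
  have "(arbitrary union_of (\<lambda>U. U \<in> \<B>)) S"
    using assms(2) basis by metis
  then obtain \<U> where "\<U> \<subseteq> \<B>" "\<Union>\<U> = S"
    unfolding union_of_def by auto
  then show ?thesis
    using that \<B> assms(3) by blast
qed

lemma openin_topspace_Diff_finite:
  assumes "t1_space X" "finite F"
  shows "openin X (topspace X - F)"
proof -
  have "closedin X (topspace X \<inter> F)"
    using assms unfolding t1_space_closedin_finite by blast
  then show ?thesis
    by (simp add: openin_closedin_eq Diff_Diff_Int)
qed

text \<open>The image of a clopen subset of \<open>U\<close> under a homeomorphism \<open>U \<rightarrow> V\<close> is open, but it is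
  only known to be closed in \<open>V\<close>; landing inside a set \<open>E \<subseteq> V\<close> closed in \<open>X\<close> repairs this.\<close>

lemma homeomorphic_maps_restrict_clopen:
  assumes h: "homeomorphic_maps (subtopology X U) (subtopology X V) h h'"
    and "openin X U" "openin X V"
    and C: "openin X C" "closedin X C" "C \<subseteq> U"
    and E: "closedin X E" "E \<subseteq> V" "h ` C \<subseteq> E"
  shows "openin X (h ` C)" "closedin X (h ` C)"
    and "homeomorphic_maps (subtopology X C) (subtopology X (h ` C)) h h'"
proof -
  have hU: "homeomorphic_map (subtopology X U) (subtopology X V) h"
    using h homeomorphic_maps_imp_map by blast
  have "openin (subtopology X U) C"
    using C \<open>openin X U\<close> openin_open_subtopology by blast
  then have "openin (subtopology X V) (h ` C)"
    using homeomorphic_imp_open_map[OF hU] unfolding open_map_def by blast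
  then show "openin X (h ` C)"
    using \<open>openin X V\<close> openin_trans_full by blast
  have "closedin (subtopology X U) C"
    using C closedin_subset_topspace by blast
  then have "closedin (subtopology X V) (h ` C)"
    using homeomorphic_imp_closed_map[OF hU] unfolding closed_map_def by blast
  then obtain K where "closedin X K" "h ` C = K \<inter> V"
    unfolding closedin_subtopology by auto
  then have "h ` C = K \<inter> E"
    using E by blast
  then show "closedin X (h ` C)"
    using \<open>closedin X K\<close> E(1) by auto
  have "h ` C \<subseteq> V"
    using E by blast
  then have "h ` (topspace (subtopology X U) \<inter> C) = topspace (subtopology X V) \<inter> h ` C"
    using C(3) openin_subset[OF \<open>openin X U\<close>] openin_subset[OF \<open>openin X V\<close>] by auto
  then have "homeomorphic_maps (subtopology (subtopology X U) C)
      (subtopology (subtopology X V) (h ` C)) h h'"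
    by (rule homeomorphic_maps_subtopologies[OF h])
  moreover have "U \<inter> C = C" "V \<inter> h ` C = h ` C"
    using C(3) \<open>h ` C \<subseteq> V\<close> by blast+
  ultimately show "homeomorphic_maps (subtopology X C) (subtopology X (h ` C)) h h'"
    by (simp add: subtopology_subtopology)
qed

definition swap_map :: "'a set \<Rightarrow> 'a set \<Rightarrow> ('a \<Rightarrow> 'a) \<Rightarrow> ('a \<Rightarrow> 'a) \<Rightarrow> 'a \<Rightarrow> 'a" where
  "swap_map C D h h' z = (if z \<in> C then h z else if z \<in> D then h' z else z)"

lemma swap_map_involution:
  assumes "disjnt C D" "h ` C \<subseteq> D" "h' ` D \<subseteq> C"
    and "\<And>x. x \<in> C \<Longrightarrow> h' (h x) = x" "\<And>y. y \<in> D \<Longrightarrow> h (h' y) = y"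
  shows "swap_map C D h h' (swap_map C D h h' z) = z"
  using assms unfolding swap_map_def disjnt_def by auto

lemma continuous_map_swap_map:
  assumes "openin X C" "closedin X C" "openin X D" "closedin X D" "disjnt C D"
    and h: "continuous_map (subtopology X C) X h" and h': "continuous_map (subtopology X D) X h'"
  shows "continuous_map X X (swap_map C D h h')"
proof (rule pasting_lemma[where I = "{C, D, topspace X - (C \<union> D)}" and T = id
      and f = "\<lambda>_. swap_map C D h h'"])
  show "openin X (id T)" if "T \<in> {C, D, topspace X - (C \<union> D)}" for T
    using that assms(1-4) by auto
  have "continuous_map (subtopology X C) X (swap_map C D h h')"
    using h by (rule continuous_map_eq) (simp add: swap_map_def)
  moreover have "continuous_map (subtopology X D) X (swap_map C D h h')"
    using h' by (rule continuous_map_eq)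
      (use \<open>disjnt C D\<close> in \<open>auto simp: swap_map_def disjnt_def\<close>)
  moreover have "continuous_map (subtopology X (topspace X - (C \<union> D))) X (swap_map C D h h')"
    using continuous_map_id_subt[of X "topspace X - (C \<union> D)"]
    by (rule continuous_map_eq) (simp add: swap_map_def)
  ultimately show "continuous_map (subtopology X (id T)) X (swap_map C D h h')"
    if "T \<in> {C, D, topspace X - (C \<union> D)}" for T
    using that by auto
qed auto

lemma homeomorphic_map_swap_map:
  assumes "openin X C" "closedin X C" "openin X D" "closedin X D" "disjnt C D"
    and h: "homeomorphic_maps (subtopology X C) (subtopology X D) h h'"
  shows "homeomorphic_map X X (swap_map C D h h')"
proof -
  have C: "topspace (subtopology X C) = C" and D: "topspace (subtopology X D) = D"
    using assms(1,3) openin_subset by auto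
  have "continuous_map (subtopology X C) X h" "continuous_map (subtopology X D) X h'"
    using h unfolding homeomorphic_maps_def continuous_map_in_subtopology by auto
  then have "continuous_map X X (swap_map C D h h')"
    using continuous_map_swap_map assms(1-5) by blast
  moreover have "swap_map C D h h' (swap_map C D h h' z) = z" for z
  proof (rule swap_map_involution[OF \<open>disjnt C D\<close>])
    show "h ` C \<subseteq> D" "h' ` D \<subseteq> C"
      using h C D unfolding homeomorphic_maps_def continuous_map_def by auto
    show "h' (h x) = x" if "x \<in> C" for x
      using h C that unfolding homeomorphic_maps_def by auto
    show "h (h' y) = y" if "y \<in> D" for y
      using h D that unfolding homeomorphic_maps_def by auto
  qed
  ultimately have "homeomorphic_maps X X (swap_map C D h h') (swap_map C D h h')"
    unfolding homeomorphic_maps_def by auto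
  then show ?thesis
    by (rule homeomorphic_maps_imp_map)
qed

lemma similar_points_disjoint_clopen_nbhds:
  assumes "Hausdorff_space X" "zero_dimensional X" "similar_points X a b" "a \<noteq> b"
    and W: "openin X W" "a \<in> W" "b \<in> W"
  obtains C D h h' where "openin X C" "closedin X C" "openin X D" "closedin X D"
    "C \<subseteq> W" "D \<subseteq> W" "disjnt C D" "a \<in> C" "h a = b"
    "homeomorphic_maps (subtopology X C) (subtopology X D) h h'"
proof -
  obtain U V h where UV: "openin X U" "a \<in> U" "openin X V" "b \<in> V"
    and "homeomorphic_map (subtopology X U) (subtopology X V) h" "h a = b"
    using assms(3) unfolding similar_points_def by blast
  then obtain h' where h: "homeomorphic_maps (subtopology X U) (subtopology X V) h h'"
    using homeomorphic_map_maps by blast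
  obtain A B where AB: "openin X A" "openin X B" "a \<in> A" "b \<in> B" "disjnt A B"
    using assms(1,4) similar_points_in_topspace[OF assms(3)]
    unfolding Hausdorff_space_def by blast
  have "openin X (B \<inter> V \<inter> W)" "b \<in> B \<inter> V \<inter> W"
    using AB UV W by auto
  then obtain E where E: "openin X E" "closedin X E" "b \<in> E" "E \<subseteq> B \<inter> V \<inter> W"
    by (rule zero_dimensional_clopen_subset[OF assms(2)])
  have "openin (subtopology X V) E"
    using E UV(3) openin_open_subtopology by blast
  then have "openin (subtopology X U) {x \<in> topspace (subtopology X U). h x \<in> E}"
    using h openin_continuous_map_preimage unfolding homeomorphic_maps_def by blast
  moreover have "{x \<in> topspace (subtopology X U). h x \<in> E} = {x \<in> U. h x \<in> E}"
    using UV(1) openin_subset by auto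
  ultimately have "openin (subtopology X U) {x \<in> U. h x \<in> E}"
    by (simp only:)
  then have "openin X ({x \<in> U. h x \<in> E} \<inter> A \<inter> W)"
    using UV(1) AB(1) W(1) openin_trans_full by blast
  moreover have "a \<in> {x \<in> U. h x \<in> E} \<inter> A \<inter> W"
    using UV(2) E(3) AB(3) W(2) \<open>h a = b\<close> by simp
  ultimately obtain C where C: "openin X C" "closedin X C" "a \<in> C"
      "C \<subseteq> {x \<in> U. h x \<in> E} \<inter> A \<inter> W"
    by (rule zero_dimensional_clopen_subset[OF assms(2)])
  then have "C \<subseteq> U" "h ` C \<subseteq> E" "E \<subseteq> V"
    using E by blast+
  note D = homeomorphic_maps_restrict_clopen[OF h UV(1,3) C(1,2) this(1) E(2) this(3,2)]
  show thesis
  proof (rule that[OF C(1,2) D(1,2) _ _ _ C(3) \<open>h a = b\<close> D(3)])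
    show "C \<subseteq> W" "h ` C \<subseteq> W" "disjnt C (h ` C)"
      using C E AB \<open>h ` C \<subseteq> E\<close> unfolding disjnt_def by blast+
  qed
qed

lemma Homeo_moves_similar_point_fixing_finite:
  assumes "Hausdorff_space X" "zero_dimensional X" "similar_points X a b"
    and "finite F" "a \<notin> F" "b \<notin> F"
  shows "\<exists>f\<in>Homeo X. f a = b \<and> (\<forall>z\<in>F. f z = z)"
proof (cases "a = b")
  case True
  then show ?thesis
    by (intro bexI[of _ id]) (auto simp: Homeo_def)
next
  case False
  have "openin X (topspace X - F)"
    using openin_topspace_Diff_finite Hausdorff_imp_t1_space assms(1,4) by blast
  moreover have "a \<in> topspace X - F" "b \<in> topspace X - F"
    using similar_points_in_topspace[OF assms(3)] assms(5,6) by auto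
  ultimately obtain C D h h' where "openin X C" "closedin X C" "openin X D" "closedin X D"
    "C \<subseteq> topspace X - F" "D \<subseteq> topspace X - F" "disjnt C D" "a \<in> C" "h a = b"
    "homeomorphic_maps (subtopology X C) (subtopology X D) h h'"
    by (rule similar_points_disjoint_clopen_nbhds[OF assms(1-3) False])
  then show ?thesis
    using homeomorphic_map_swap_map[of X C D h h']
    by (intro bexI[of _ "swap_map C D h h'"]) (auto simp: Homeo_def swap_map_def)
qed

lemma Homeo_maps_similar_tuple:
  fixes k :: nat
  assumes "Hausdorff_space X" "zero_dimensional X"
    and "\<forall>i<k. x i \<in> topspace X" "inj_on x {..<k}" "inj_on y {..<k}"
    and "\<forall>i<k. similar_points X (x i) (y i)"
  shows "\<exists>g\<in>Homeo X. \<forall>i<k. g (x i) = y i"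
  using assms(3-)
proof (induction k)
  case 0
  show ?case
    by (intro bexI[of _ id]) (auto simp: Homeo_def)
next
  case (Suc k)
  then obtain g where g: "homeomorphic_map X X g" "\<forall>i<k. g (x i) = y i"
    by (auto simp: Homeo_def inj_on_subset[of _ "{..<Suc k}" "{..<k}"])
  have "g (x k) \<notin> y ` {..<k}"
  proof
    assume "g (x k) \<in> y ` {..<k}"
    then obtain i where "i < k" "g (x k) = g (x i)"
      using g(2) by auto
    then have "x k = x i"
      using g(1) Suc.prems(1) unfolding homeomorphic_map_def by (auto dest: inj_onD)
    then show False
      using \<open>i < k\<close> Suc.prems(2) by (auto dest: inj_onD)
  qed
  moreover have "y k \<notin> y ` {..<k}"
    using Suc.prems(3) by (auto dest: inj_onD)
  moreover have "similar_points X (g (x k)) (y k)"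
    using similar_points_homeomorphic_image[OF _ g(1)] Suc.prems(4) by simp
  ultimately obtain f where f: "f \<in> Homeo X" "f (g (x k)) = y k" "\<forall>z\<in>y ` {..<k}. f z = z"
    using Homeo_moves_similar_point_fixing_finite[OF assms(1,2) _ finite_imageI[OF finite_lessThan]]
    by blast
  have "f \<circ> g \<in> Homeo X"
    using f(1) g(1) homeomorphic_map_compose unfolding Homeo_def by blast
  moreover have "\<forall>i<Suc k. (f \<circ> g) (x i) = y i"
    using f(2,3) g(2) by (simp add: less_Suc_eq)
  ultimately show ?case
    by blast
qed

theorem theorem20:
  fixes X :: "'a topology"
  assumes "Hausdorff_space X" and "zero_dimensional X"
  shows "fully_transitive X (Homeo X)"
  unfolding fully_transitive_def
  using Homeo_maps_similar_tuple[OF assms] by blast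

end
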